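(* Let $n\in\mathbb{N}$, $d\in\mathbb{N}_0$, $\boldsymbol{c}=(c_1,\ldots,c_d)\in(\mathbb{N}\setminus\{2\})^d$ and $\boldsymbol{z}=(z_0,\ldots,z_d)\in\mathbb{C}^{d+1}$ with $|z_j|<1$ for $j=0,\ldots,d$. Put $c_0=1$, $c_{d+1}=0$, $\delta_i=\delta(c_i)+\delta(c_{i+1})$ for $0\le i\le d$, and $k_{-1}=0$. Then $$G_n(\boldsymbol{c};\boldsymbol{z})=\frac{n\binom{2n}{n}}{2^{4n-2}}\sum_{n\geq k_0\geq k_1\geq\cdots\geq k_d\geq1}\binom{2n-1}{n-k_0}\prod_{i=0}^{d}\frac{(-1)^{k_i\delta_i}(2k_i-1)^{\delta_i-1}}{(2k_i-1)^2-z_i^2}V_{k_{i-1},k_i}^{\#}(\{1\}^{c_i-3}).$$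
   Context: For an index (finite sequence of positive integers) $\boldsymbol{s}=(s_1,\ldots,s_r)$ and $n\in\mathbb{N}$, the multiple $t$-harmonic star sum is $t^{\star}_n(\boldsymbol{s})=\sum_{n\geq k_1\geq\cdots\geq k_r\geq1}\prod_{j=1}^r(2k_j-1)^{-s_j}$, with $t^\star_n(\emptyset)=1$. $\{s\}^a$ denotes $s$ repeated $a$ times; for $a\le 0$, $\{1\}^{a}$ is the empty index. The generating function is $G_n(\boldsymbol{c};\boldsymbol{z})=\sum_{a_0,\ldots,a_d\geq0}t^{\star}_n(\{2\}^{a_0},c_1,\{2\}^{a_1},\ldots,c_d,\{2\}^{a_d})z_0^{2a_0}\cdots z_d^{2a_d}$. For $k,m\in\mathbb{N}_0$ let $\triangle(k,m)=0$ if $k=m$ and $1$ otherwise. For an index $\boldsymbol{s}=(s_1,\ldots,s_r)$: if $\boldsymbol{s}\ne\emptyset$ and $k\ge m$, $V^{\#}_{k,m}(\boldsymbol{s})=\frac{2k-1}{2m-1}\sum_{k\geq l_1\geq\cdots\geq l_r\geq m}\frac{2^{\triangle(k,l_1)+\triangle(l_1,l_2)+\cdots+\triangle(l_r,m)}}{(2l_1-1)^{s_1}\cdots(2l_r-1)^{s_r}}$; otherwise $V^{\#}_{k,m}(\boldsymbol{s})=\left(2\cdot\frac{2k-1}{2m-1}\right)^{\triangle(k,m)}$. For $c\in\mathbb{N}_0$, $\delta(c)=2$ if $c=0$, $\delta(c)=1$ if $c=1$, $\delta(c)=0$ if $c\ge3$. *)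

theory Defs
  imports "HOL-Analysis.Analysis"
begin

text \<open>Multiple t-harmonic star sum:
  t*_n(s_1,...,s_r) = sum over n >= k_1 >= ... >= k_r >= 1 of prod (2k_j-1)^(-s_j),
  written via the nested-sum recursion; t*_n(empty) = 1.\<close>
fun tstar :: "nat \<Rightarrow> nat list \<Rightarrow> real" where
  "tstar n [] = 1"
| "tstar n (s # ss) = (\<Sum>k=1..n. tstar k ss / (2 * real k - 1) ^ s)"

definition tri :: "nat \<Rightarrow> nat \<Rightarrow> nat" where
  "tri k m = (if k = m then 0 else 1)"

text \<open>Inner sum of V#: for s = (s_1..s_r), sum over k >= l_1 >= ... >= l_r >= m of
  2^(tri(k,l_1)+...+tri(l_r,m)) / prod (2 l_j - 1)^(s_j).\<close>
fun Vsum :: "nat \<Rightarrow> nat \<Rightarrow> nat list \<Rightarrow> real" where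
  "Vsum k m [] = 2 ^ tri k m"
| "Vsum k m (s # ss) = (\<Sum>l=m..k. 2 ^ tri k l / (2 * real l - 1) ^ s * Vsum l m ss)"

definition Vsharp :: "nat \<Rightarrow> nat \<Rightarrow> nat list \<Rightarrow> real" where
  "Vsharp k m s = (if s \<noteq> [] \<and> k \<ge> m
      then (2 * real k - 1) / (2 * real m - 1) * Vsum k m s
      else (2 * ((2 * real k - 1) / (2 * real m - 1))) ^ tri k m)"

definition delta :: "nat \<Rightarrow> nat" where
  "delta c = (if c = 0 then 2 else if c = 1 then 1 else 0)"

text \<open>The index ({2}^a_0, c_1, {2}^a_1, ..., c_d, {2}^a_d).\<close>
definition gidx :: "nat \<Rightarrow> (nat \<Rightarrow> nat) \<Rightarrow> (nat \<Rightarrow> nat) \<Rightarrow> nat list" where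
  "gidx d c a = replicate (a 0) 2 @ concat (map (\<lambda>i. c i # replicate (a i) 2) [1..<Suc d])"

definition gexps :: "nat \<Rightarrow> (nat \<Rightarrow> nat) set" where
  "gexps d = {a. \<forall>j>d. a j = 0}"

definition Gterm :: "nat \<Rightarrow> nat \<Rightarrow> (nat \<Rightarrow> nat) \<Rightarrow> (nat \<Rightarrow> complex) \<Rightarrow> (nat \<Rightarrow> nat) \<Rightarrow> complex" where
  "Gterm n d c z a = of_real (tstar n (gidx d c a)) * (\<Prod>j\<le>d. z j ^ (2 * a j))"

definition G :: "nat \<Rightarrow> nat \<Rightarrow> (nat \<Rightarrow> nat) \<Rightarrow> (nat \<Rightarrow> complex) \<Rightarrow> complex" where
  "G n d c z = infsum (Gterm n d c z) (gexps d)"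

definition chains :: "nat \<Rightarrow> nat \<Rightarrow> (nat \<Rightarrow> nat) set" where
  "chains n d = {k. (\<forall>i\<le>d. 1 \<le> k i \<and> k i \<le> n) \<and> (\<forall>i<d. k (Suc i) \<le> k i) \<and> (\<forall>i>d. k i = 0)}"

end

theory Submission
  imports Defs
begin

text \<open>
  Write w_k = 2k - 1 and E_m(k) = rho_m binom(2m-1, m-k) with rho_m = 2m binom(2m,m) / 16^m, so
  that the constant of the theorem times binom(2n-1, n-k_0) is 2 E_n(k_0). From the recurrence
  E_m(k) (w_m^2 - w_k^2) = E_(m-1)(k) w_m^2 one gets sum_(l=k..m) E_l(k) / w_l^2 = E_m(k) / w_k^2,
  so the operator f |-> (m |-> sum_(l<=m) f(l) / w_l^2), which prepends a 2 to the index of t*,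
  acts on functions m |-> sum_k E_m(k) psi(k) by psi(k) |-> psi(k) / w_k^2. Summing over the
  length of a block {2}^a is then a geometric series, turning psi(k) into
  psi(k) w_k^2 / (w_k^2 - z^2). The constant 1 and the operators f |-> sum_(q<=p) f(q) / w_q^c for
  c = 1 and c >= 3 keep this form; their coefficients come from alternating binomial sums, which
  produce the factors V#. Induction on d, peeling off the block ({2}^(a_0), c_1), gives the
  formula as a nested sum, whose expansion is the sum over chains; running the same argument
  with |z_j| in place of z_j gives absolute convergence.
\<close>

section \<open>Odd numbers and partial row sums of binomial coefficients\<close>

definition oddnum :: "nat \<Rightarrow> 'a::ring_1" where
  "oddnum k = 2 * of_nat k - 1"

lemma oddnum_nonzero [simp]: "oddnum k \<noteq> (0::'a::ring_char_0)"
proof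
  assume "oddnum k = (0::'a)"
  then have "of_nat (2 * k) = (of_nat 1 :: 'a)"
    by (simp add: oddnum_def)
  then show False
    by (simp only: of_nat_eq_iff) arith
qed

lemma of_real_oddnum [simp]: "of_real (oddnum k) = oddnum k"
  by (simp add: oddnum_def)

lemma oddnum_Suc: "oddnum (Suc k) = 2 * of_nat k + 1"
  by (simp add: oddnum_def algebra_simps)

lemma one_le_oddnum: "1 \<le> k \<Longrightarrow> (1::real) \<le> oddnum k"
  by (simp add: oddnum_def)

lemma norm_oddnum: "1 \<le> k \<Longrightarrow> norm (oddnum k :: complex) = oddnum k"
  using one_le_oddnum[of k] of_real_oddnum[of k, where 'a=complex] norm_of_real[of "oddnum k"]
  by simp

lemma choose_absorb_diff:
  "real (Suc n) * real (n choose j) = (real (Suc n) - real j) * real (Suc n choose j)"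
proof (cases "j \<le> Suc n")
  case True
  then show ?thesis
    using binomial_absorb_comp[of "Suc n" j] by (metis diff_Suc_1 of_nat_diff of_nat_mult)
qed (simp add: binomial_eq_0)

lemma choose_Suc_absorb:
  "(real n - real j) * real (n choose j) = real (Suc j) * real (n choose Suc j)"
proof -
  have "real (Suc n) * real (n choose j) = real (Suc j) * (real (n choose j) + real (n choose Suc j))"
    by (metis Suc_times_binomial_eq binomial_Suc_Suc mult.commute of_nat_add of_nat_mult)
  then show ?thesis
    unfolding of_nat_Suc by algebra
qed

lemma sum_atLeastAtMost_reflect:
  fixes l m :: nat
  assumes "l \<le> m"
  shows "(\<Sum>k=l..m. f k) = (\<Sum>i\<le>m-l. f (m - i))"
  by (rule sum.reindex_bij_witness[of _ "\<lambda>i. m - i" "\<lambda>k. m - k"]) (use assms in auto)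

lemma alternating_partial_row_sum:
  "(\<Sum>i\<le>j. (-1) ^ (j - i) * real (Suc n choose i)) = real (n choose j)"
proof (induction j)
  case (Suc j)
  have "(\<Sum>i\<le>j. (-1) ^ (Suc j - i) * real (Suc n choose i)) = - (\<Sum>i\<le>j. (-1) ^ (j - i) * real (Suc n choose i))"
    by (simp add: sum_negf[symmetric] Suc_diff_le)
  then show ?case
    by (simp add: Suc.IH)
qed simp

lemma partial_row_sum_linear:
  "(\<Sum>i\<le>j. real (Suc n choose i) * (real (Suc n) - 2 * real i))
     = real (Suc n) * real (n choose j)"
proof (induction j)
  case (Suc j)
  have "(real n - real j) * real (n choose j) = real (Suc j) * real (n choose Suc j)"
    by (rule choose_Suc_absorb)
  with Suc.IH show ?case
    unfolding sum.atMost_Suc binomial_Suc_Suc of_nat_add of_nat_Suc by algebra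
qed simp

lemma alternating_partial_row_sum_linear:
  "real n * (\<Sum>i\<le>j. (-1) ^ (j - i) * real (Suc n choose i) * (real (Suc n) - 2 * real i))
     = real (Suc n) * (real n - 2 * real j) * real (n choose j)"
proof (induction j)
  case (Suc j)
  have "(\<Sum>i\<le>Suc j. (-1) ^ (Suc j - i) * real (Suc n choose i) * (real (Suc n) - 2 * real i))
      = real (Suc n choose Suc j) * (real (Suc n) - 2 * real (Suc j))
        - (\<Sum>i\<le>j. (-1) ^ (j - i) * real (Suc n choose i) * (real (Suc n) - 2 * real i))"
    by (simp add: sum_negf[symmetric] Suc_diff_le)
  moreover have "(real n - real j) * real (n choose j) = real (Suc j) * real (n choose Suc j)"
    by (rule choose_Suc_absorb)
  ultimately show ?case
    using Suc.IH unfolding binomial_Suc_Suc of_nat_add of_nat_Suc by algebra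
qed simp

section \<open>The coefficients E_m(k)\<close>

declare binomial_Suc_Suc [simp del]

definition rho :: "nat \<Rightarrow> real" where
  "rho m = 2 * real m * real (2 * m choose m) / 16 ^ m"

definition Ecoef :: "nat \<Rightarrow> nat \<Rightarrow> real" where
  "Ecoef m k = rho m * real ((2 * m - 1) choose (m - k))"

lemma central_binomial_Suc:
  "Suc m * (2 * Suc m choose Suc m) = 2 * (Suc (2 * m) * (2 * m choose m))"
proof -
  have "Suc m * (2 * Suc m choose Suc m) = 2 * (Suc m * (Suc (2 * m) choose Suc m))"
    using Suc_times_binomial[of m "Suc (2 * m)"] binomial_symmetric[of m "Suc (2 * m)"]
    by (simp add: Suc_diff_le mult.left_commute del: binomial_Suc_Suc)
  also have "\<dots> = 2 * (Suc (2 * m) * (2 * m choose m))"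
    by (simp only: Suc_times_binomial)
  finally show ?thesis .
qed

lemma rho_Suc: "8 * real m * rho (Suc m) = (2 * real m + 1) * rho m"
proof -
  have "rho (Suc m) = 2 * (real (Suc m) * real (2 * Suc m choose Suc m)) / (16 * 16 ^ m)"
    unfolding rho_def power_Suc by (simp only: mult.assoc)
  also have "real (Suc m) * real (2 * Suc m choose Suc m) = 2 * ((2 * real m + 1) * real (2 * m choose m))"
    using arg_cong[OF central_binomial_Suc, of real] by (simp only: of_nat_mult of_nat_numeral) simp
  finally have rho_Suc_eq: "rho (Suc m) = (2 * real m + 1) * real (2 * m choose m) / (4 * 16 ^ m)"
    by simp
  show ?thesis
    unfolding rho_Suc_eq rho_def[of m] by (simp add: field_simps)
qed

lemma Ecoef_Suc_recurrence:
  assumes "1 \<le> k" "k \<le> m"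
  shows "Ecoef (Suc m) k * (oddnum (Suc m) ^ 2 - oddnum k ^ 2) = Ecoef m k * oddnum (Suc m) ^ 2"
proof -
  define j where "j = m - k"
  have absorb1: "real (Suc j) * real (Suc (2 * m) choose Suc j) = real (Suc (2 * m)) * real (2 * m choose j)"
    using arg_cong[OF Suc_times_binomial[of j "2 * m"], of real] by (simp only: of_nat_mult)
  have absorb2: "real (m + k) * real (2 * m choose j) = real (2 * m) * real (2 * m - 1 choose j)"
  proof -
    have "2 * m - j = m + k"
      using assms unfolding j_def by simp
    then have "(m + k) * (2 * m choose j) = 2 * m * (2 * m - 1 choose j)"
      using binomial_absorb_comp[of "2 * m" j] by simp
    from arg_cong[OF this, of real] show ?thesis
      by (simp only: of_nat_mult)
  qed
  have diff_sq: "oddnum (Suc m) ^ 2 - oddnum k ^ 2 = 4 * real (m + k) * real (Suc j)"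
  proof -
    have Suc_j: "real (Suc j) = real m + 1 - real k"
      using assms unfolding j_def by (simp add: of_nat_diff)
    show ?thesis
      unfolding Suc_j oddnum_Suc oddnum_def by (simp add: power2_eq_square algebra_simps)
  qed
  have "2 * Suc m - 1 = Suc (2 * m)" "Suc m - k = Suc j"
    using assms unfolding j_def by simp_all
  then have "Ecoef (Suc m) k = rho (Suc m) * real (Suc (2 * m) choose Suc j)"
    unfolding Ecoef_def by simp
  then have "Ecoef (Suc m) k * (oddnum (Suc m) ^ 2 - oddnum k ^ 2)
      = 4 * rho (Suc m) * real (m + k) * (real (Suc j) * real (Suc (2 * m) choose Suc j))"
    unfolding diff_sq by (simp only: mult_ac)
  also have "\<dots> = 4 * rho (Suc m) * real (Suc (2 * m)) * (real (m + k) * real (2 * m choose j))"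
    unfolding absorb1 by (simp only: mult_ac)
  also have "\<dots> = (8 * real m * rho (Suc m)) * real (Suc (2 * m)) * real (2 * m - 1 choose j)"
    unfolding absorb2 by simp
  also have "\<dots> = Ecoef m k * oddnum (Suc m) ^ 2"
    unfolding rho_Suc Ecoef_def j_def oddnum_Suc by (simp add: power2_eq_square mult_ac)
  finally show ?thesis .
qed

lemma Ecoef_eq_Ecoef_Suc:
  assumes "1 \<le> k" "k \<le> m"
  shows "Ecoef m k = Ecoef (Suc m) k - Ecoef (Suc m) k * oddnum k ^ 2 / oddnum (Suc m) ^ 2"
  using Ecoef_Suc_recurrence[OF assms] by (simp add: field_simps)

lemma sum_Ecoef_div_oddnum_sq:
  assumes "1 \<le> k" "k \<le> m"
  shows "(\<Sum>l=k..m. Ecoef l k / oddnum l ^ 2) = Ecoef m k / oddnum k ^ 2"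
  using assms(2)
proof (induction m rule: dec_induct)
  case (step m)
  then show ?case
    using Ecoef_eq_Ecoef_Suc[OF assms(1) step(1)] by (simp add: sum.cl_ivl_Suc field_simps)
qed simp

lemma sum_Ecoef_Suc:
  assumes "1 \<le> k'" "k' \<le> Suc p"
  shows "(\<Sum>k=k'..Suc p. Ecoef (Suc p) k * g k) = (\<Sum>k=k'..p. Ecoef p k * g k)
           + (\<Sum>k=k'..Suc p. Ecoef (Suc p) k * g k * oddnum k ^ 2 / oddnum (Suc p) ^ 2)"
proof -
  have "(\<Sum>k=k'..p. Ecoef p k * g k)
      = (\<Sum>k=k'..p. Ecoef (Suc p) k * g k - Ecoef (Suc p) k * g k * oddnum k ^ 2 / oddnum (Suc p) ^ 2)"
  proof (rule sum.cong)
    fix k assume "k \<in> {k'..p}"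
    then have E: "Ecoef p k = Ecoef (Suc p) k - Ecoef (Suc p) k * oddnum k ^ 2 / oddnum (Suc p) ^ 2"
      using assms by (intro Ecoef_eq_Ecoef_Suc) auto
    show "Ecoef p k * g k = Ecoef (Suc p) k * g k - Ecoef (Suc p) k * g k * oddnum k ^ 2 / oddnum (Suc p) ^ 2"
      unfolding E by (simp add: algebra_simps)
  qed simp
  then show ?thesis
    using assms by (simp add: sum.cl_ivl_Suc sum_subtractf)
qed

(* One binomial identity per row p suffices: sum_Ecoef_Suc turns it into the step from p to p + 1. *)
lemma Ecoef_expansion:
  assumes "1 \<le> k'"
    and "\<And>p. k' \<le> p \<Longrightarrow>
      (\<Sum>k=k'..p. real ((2 * p - 1) choose (p - k)) * g k * oddnum k ^ 2) = real ((2 * p - 1) choose (p - k')) * h p"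
  shows "(\<Sum>k=k'..p. Ecoef p k * g k) = (\<Sum>q=k'..p. Ecoef q k' * h q / oddnum q ^ 2)"
proof (induction p)
  case (Suc p)
  show ?case
  proof (cases "k' \<le> Suc p")
    case True
    have "(\<Sum>k=k'..Suc p. Ecoef (Suc p) k * g k * oddnum k ^ 2 / oddnum (Suc p) ^ 2)
        = rho (Suc p) / oddnum (Suc p) ^ 2 * (\<Sum>k=k'..Suc p. real ((2 * Suc p - 1) choose (Suc p - k)) * g k * oddnum k ^ 2)"
      unfolding sum_distrib_left by (rule sum.cong) (simp_all add: Ecoef_def)
    also have "\<dots> = Ecoef (Suc p) k' * h (Suc p) / oddnum (Suc p) ^ 2"
      unfolding assms(2)[OF True] Ecoef_def by simp
    finally have new_terms: "(\<Sum>k=k'..Suc p. Ecoef (Suc p) k * g k * oddnum k ^ 2 / oddnum (Suc p) ^ 2)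
        = Ecoef (Suc p) k' * h (Suc p) / oddnum (Suc p) ^ 2" .
    show ?thesis
      unfolding sum_Ecoef_Suc[OF assms(1) True] new_terms Suc.IH using True by (simp add: sum.cl_ivl_Suc)
  qed simp
qed (use assms(1) in simp)

section \<open>Binomial sums weighted by V#\<close>

lemma sum_triangle_swap:
  fixes a b :: nat
  shows "(\<Sum>k=a..b. \<Sum>l=a..k. f k l) = (\<Sum>l=a..b. \<Sum>k=l..b. f k l)"
proof -
  have "(\<Sum>k=a..b. \<Sum>l=a..k. f k l) = (\<Sum>k=a..b. \<Sum>l\<in>{l\<in>{a..b}. l \<le> k}. f k l)"
    by (intro sum.cong refl) auto
  also have "\<dots> = (\<Sum>l=a..b. \<Sum>k\<in>{k\<in>{a..b}. l \<le> k}. f k l)"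
    by (rule sum.swap_restrict) simp_all
  also have "\<dots> = (\<Sum>l=a..b. \<Sum>k=l..b. f k l)"
    by (intro sum.cong refl) auto
  finally show ?thesis .
qed

lemma sum_times_two_pow_tri:
  fixes f :: "nat \<Rightarrow> real"
  assumes "l \<le> m"
  shows "(\<Sum>k=l..m. f k * 2 ^ tri k l) = 2 * (\<Sum>k=l..m. f k) - f l"
proof -
  have "(\<Sum>k=l..m. f k * 2 ^ tri k l) = f l + (\<Sum>k=Suc l..m. 2 * f k)"
    using assms by (subst sum.atLeast_Suc_atMost) (auto simp: tri_def intro!: sum.cong)
  moreover have "(\<Sum>k=l..m. f k) = f l + (\<Sum>k=Suc l..m. f k)"
    using assms by (rule sum.atLeast_Suc_atMost)
  ultimately show ?thesis
    by (simp add: sum_distrib_left)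
qed

lemma oddnum_row_Suc:
  assumes "1 \<le> m"
  shows "2 * m - 1 = Suc (2 * m - 2)" "real (Suc (2 * m - 2)) = oddnum m"
  using assms by (simp_all add: oddnum_def of_nat_diff)

lemma oddnum_times_choose:
  assumes "1 \<le> m"
  shows "oddnum m * real ((2 * m - 2) choose j) = (oddnum m - real j) * real ((2 * m - 1) choose j)"
  unfolding oddnum_row_Suc(1)[OF assms] oddnum_row_Suc(2)[OF assms, symmetric] by (rule choose_absorb_diff)

lemma alternating_choose_sum:
  assumes "l \<le> m" "1 \<le> m"
  shows "(\<Sum>k=l..m. (-1) ^ k * real ((2 * m - 1) choose (m - k))) = (-1) ^ l * real ((2 * m - 2) choose (m - l))"
proof -
  have "(\<Sum>k=l..m. (-1) ^ k * real ((2 * m - 1) choose (m - k)))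
      = (-1) ^ l * (\<Sum>i\<le>m-l. (-1) ^ (m - l - i) * real (Suc (2 * m - 2) choose i))"
    unfolding sum_atLeastAtMost_reflect[OF assms(1)] oddnum_row_Suc(1)[OF assms(2)] sum_distrib_left
  proof (rule sum.cong)
    fix i assume "i \<in> {..m-l}"
    then have "m - i = (m - l - i) + l" "m - (m - i) = i"
      using assms by auto
    then show "(-1) ^ (m - i) * real (Suc (2 * m - 2) choose (m - (m - i)))
        = (-1) ^ l * ((-1) ^ (m - l - i) * real (Suc (2 * m - 2) choose i))"
      by (simp only: power_add mult_ac)
  qed simp
  then show ?thesis
    by (simp only: alternating_partial_row_sum)
qed

lemma choose_sum_oddnum:
  assumes "l \<le> m" "1 \<le> m"
  shows "(\<Sum>k=l..m. real ((2 * m - 1) choose (m - k)) * oddnum k) = oddnum m * real ((2 * m - 2) choose (m - l))"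
proof -
  have "(\<Sum>k=l..m. real ((2 * m - 1) choose (m - k)) * oddnum k)
      = (\<Sum>i\<le>m-l. real (Suc (2 * m - 2) choose i) * (real (Suc (2 * m - 2)) - 2 * real i))"
    unfolding sum_atLeastAtMost_reflect[OF assms(1)] oddnum_row_Suc(1)[OF assms(2)]
  proof (rule sum.cong)
    fix i assume "i \<in> {..m-l}"
    then have "m - (m - i) = i" "oddnum (m - i) = real (Suc (2 * m - 2)) - 2 * real i"
      using assms by (auto simp: oddnum_def of_nat_diff)
    then show "real (Suc (2 * m - 2) choose (m - (m - i))) * oddnum (m - i)
        = real (Suc (2 * m - 2) choose i) * (real (Suc (2 * m - 2)) - 2 * real i)"
      by (simp only:)
  qed simp
  also have "\<dots> = real (Suc (2 * m - 2)) * real ((2 * m - 2) choose (m - l))"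
    by (rule partial_row_sum_linear)
  finally show ?thesis
    unfolding oddnum_row_Suc(2)[OF assms(2)] .
qed

lemma alternating_choose_sum_oddnum:
  assumes "2 \<le> m"
  shows "(\<Sum>k=1..m. (-1) ^ k * real ((2 * m - 1) choose (m - k)) * oddnum k) = 0"
proof -
  define n where "n = 2 * m - 2"
  have m: "1 \<le> m" "real n \<noteq> 0" "real n - 2 * real (m - 1) = 0"
    using assms unfolding n_def by (simp_all add: of_nat_diff)
  have "(\<Sum>k=1..m. (-1) ^ k * real ((2 * m - 1) choose (m - k)) * oddnum k)
      = - (\<Sum>i\<le>m-1. (-1) ^ (m - 1 - i) * real (Suc n choose i) * (real (Suc n) - 2 * real i))"
    unfolding sum_atLeastAtMost_reflect[OF m(1)] oddnum_row_Suc(1)[OF m(1)] n_def[symmetric] sum_negf[symmetric]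
  proof (rule sum.cong)
    fix i assume "i \<in> {..m-1}"
    then have "m - i = Suc (m - 1 - i)" "m - (m - i) = i" "oddnum (m - i) = real (Suc n) - 2 * real i"
      using assms by (auto simp: n_def oddnum_def of_nat_diff)
    then show "(-1) ^ (m - i) * real (Suc n choose (m - (m - i))) * oddnum (m - i)
        = - ((-1) ^ (m - 1 - i) * real (Suc n choose i) * (real (Suc n) - 2 * real i))"
      by (simp add: power_Suc)
  qed simp
  moreover have "real n * (\<Sum>i\<le>m-1. (-1) ^ (m - 1 - i) * real (Suc n choose i) * (real (Suc n) - 2 * real i)) = 0"
    unfolding alternating_partial_row_sum_linear m(3) by simp
  ultimately show ?thesis
    using m(2) by simp
qed

lemma Vsharp_eq:
  "Vsharp k m s = (if s \<noteq> [] \<and> m \<le> k then oddnum k / oddnum m * Vsum k m s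
     else (2 * (oddnum k / oddnum m)) ^ tri k m)"
  unfolding Vsharp_def oddnum_def by simp

lemma Vsum_Cons: "Vsum k m (x # s) = (\<Sum>l=m..k. 2 ^ tri k l / oddnum l ^ x * Vsum l m s)"
  unfolding oddnum_def by simp

lemma Vsharp_Nil_le:
  assumes "m \<le> k"
  shows "Vsharp k m [] = 2 ^ tri k m * oddnum k / oddnum m"
  using assms by (cases "k = m") (simp_all add: Vsharp_eq tri_def)

lemma Vsum_eq_Vsharp:
  assumes "m \<le> l"
  shows "Vsum l m s = oddnum m / oddnum l * Vsharp l m s"
proof (cases s)
  case Nil
  then show ?thesis
    using assms by (cases "l = m") (simp_all add: Vsharp_eq tri_def)
qed (use assms in \<open>simp add: Vsharp_eq\<close>)

lemma Vsharp_Cons: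
  assumes "m \<le> k"
  shows "Vsharp k m (x # s) = (\<Sum>l=m..k. 2 ^ tri k l * oddnum k / (oddnum l ^ x * oddnum l) * Vsharp l m s)"
proof -
  have "Vsharp k m (x # s) = oddnum k / oddnum m * (\<Sum>l=m..k. 2 ^ tri k l / oddnum l ^ x * Vsum l m s)"
    unfolding Vsharp_eq[of k] Vsum_Cons using assms by simp
  also have "\<dots> = (\<Sum>l=m..k. 2 ^ tri k l * oddnum k / (oddnum l ^ x * oddnum l) * Vsharp l m s)"
    unfolding sum_distrib_left by (rule sum.cong) (simp_all add: Vsum_eq_Vsharp)
  finally show ?thesis .
qed

lemma two_oddnum_times_choose:
  assumes "1 \<le> l" "l \<le> m"
  shows "2 * oddnum m * real ((2 * m - 2) choose (m - l)) = (oddnum m + oddnum l) * real ((2 * m - 1) choose (m - l))"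
proof -
  have "2 * (oddnum m - real (m - l)) = oddnum m + (oddnum l :: real)"
    using assms by (simp add: oddnum_def of_nat_diff)
  then show ?thesis
    using oddnum_times_choose[of m "m - l"] assms by (simp add: mult.assoc)
qed

lemma alternating_choose_sum_two_pow_tri:
  assumes "1 \<le> l" "l \<le> m"
  shows "(\<Sum>k=l..m. (-1) ^ k * real ((2 * m - 1) choose (m - k)) * 2 ^ tri k l)
       = (-1) ^ l * oddnum l / oddnum m * real ((2 * m - 1) choose (m - l))"
proof -
  have "(\<Sum>k=l..m. (-1) ^ k * real ((2 * m - 1) choose (m - k)) * 2 ^ tri k l)
      = 2 * (\<Sum>k=l..m. (-1) ^ k * real ((2 * m - 1) choose (m - k))) - (-1) ^ l * real ((2 * m - 1) choose (m - l))"
    by (rule sum_times_two_pow_tri[OF assms(2)])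
  also have "\<dots> = (-1) ^ l * (2 * real ((2 * m - 2) choose (m - l)) - real ((2 * m - 1) choose (m - l)))"
    unfolding alternating_choose_sum[OF assms(2) order_trans[OF assms]] by (simp add: algebra_simps)
  also have "2 * real ((2 * m - 2) choose (m - l)) = (oddnum m + oddnum l) * real ((2 * m - 1) choose (m - l)) / oddnum m"
    using two_oddnum_times_choose[OF assms] by (simp add: eq_divide_eq mult_ac)
  also have "(-1) ^ l * ((oddnum m + oddnum l) * real ((2 * m - 1) choose (m - l)) / oddnum m - real ((2 * m - 1) choose (m - l)))
      = (-1) ^ l * oddnum l / oddnum m * real ((2 * m - 1) choose (m - l))"
    by (simp add: field_simps)
  finally show ?thesis .
qed

lemma choose_sum_Vsharp_Nil:
  assumes "1 \<le> k'" "k' \<le> m"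
  shows "(\<Sum>k=k'..m. real ((2 * m - 1) choose (m - k)) * Vsharp k k' [])
       = oddnum m / oddnum k' * real ((2 * m - 1) choose (m - k'))"
proof -
  have "(\<Sum>k=k'..m. real ((2 * m - 1) choose (m - k)) * Vsharp k k' [])
      = (\<Sum>k=k'..m. real ((2 * m - 1) choose (m - k)) * oddnum k * 2 ^ tri k k') / oddnum k'"
    unfolding sum_divide_distrib by (rule sum.cong) (simp_all add: Vsharp_Nil_le)
  also have "\<dots> = (2 * oddnum m * real ((2 * m - 2) choose (m - k'))
                   - real ((2 * m - 1) choose (m - k')) * oddnum k') / oddnum k'"
    using sum_times_two_pow_tri[OF assms(2)] choose_sum_oddnum[OF assms(2)] assms by simp
  also have "\<dots> = oddnum m / oddnum k' * real ((2 * m - 1) choose (m - k'))"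
    using two_oddnum_times_choose[OF assms] by (simp add: field_simps)
  finally show ?thesis .
qed

lemma alternating_choose_sum_Vsharp:
  assumes "1 \<le> k'" "k' \<le> m"
  shows "(\<Sum>k=k'..m. (-1) ^ k * real ((2 * m - 1) choose (m - k)) * Vsharp k k' (replicate j 1) / oddnum k)
       = (-1) ^ k' * real ((2 * m - 1) choose (m - k')) / oddnum m ^ Suc j"
proof (induction j)
  case 0
  have "(\<Sum>k=k'..m. (-1) ^ k * real ((2 * m - 1) choose (m - k)) * Vsharp k k' [] / oddnum k)
      = (\<Sum>k=k'..m. (-1) ^ k * real ((2 * m - 1) choose (m - k)) * 2 ^ tri k k') / oddnum k'"
    unfolding sum_divide_distrib by (rule sum.cong) (simp_all add: Vsharp_Nil_le)
  then show ?case
    using alternating_choose_sum_two_pow_tri[OF assms] by simp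
next
  case (Suc j)
  let ?C = "\<lambda>k. real ((2 * m - 1) choose (m - k))"
  let ?V = "\<lambda>l. Vsharp l k' (replicate j 1)"
  have "(\<Sum>k=k'..m. (-1) ^ k * ?C k * Vsharp k k' (replicate (Suc j) 1) / oddnum k)
      = (\<Sum>k=k'..m. \<Sum>l=k'..k. ?V l / oddnum l ^ 2 * ((-1) ^ k * ?C k * 2 ^ tri k l))"
  proof (rule sum.cong)
    fix k assume "k \<in> {k'..m}"
    then show "(-1) ^ k * ?C k * Vsharp k k' (replicate (Suc j) 1) / oddnum k
        = (\<Sum>l=k'..k. ?V l / oddnum l ^ 2 * ((-1) ^ k * ?C k * 2 ^ tri k l))"
      by (simp add: Vsharp_Cons sum_distrib_left sum_divide_distrib power2_eq_square field_simps)
  qed simp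
  also have "\<dots> = (\<Sum>l=k'..m. ?V l / oddnum l ^ 2 * (\<Sum>k=l..m. (-1) ^ k * ?C k * 2 ^ tri k l))"
    by (simp add: sum_triangle_swap sum_distrib_left)
  also have "\<dots> = (\<Sum>l=k'..m. (-1) ^ l * ?C l * ?V l / oddnum l) / oddnum m"
    unfolding sum_divide_distrib
  proof (rule sum.cong)
    fix l assume "l \<in> {k'..m}"
    then have "1 \<le> l" "l \<le> m"
      using assms by auto
    then show "?V l / oddnum l ^ 2 * (\<Sum>k=l..m. (-1) ^ k * ?C k * 2 ^ tri k l)
        = (-1) ^ l * ?C l * ?V l / oddnum l / oddnum m"
      unfolding alternating_choose_sum_two_pow_tri[OF \<open>1 \<le> l\<close> \<open>l \<le> m\<close>]
      by (simp add: power2_eq_square)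
  qed simp
  also have "\<dots> = (-1) ^ k' * ?C k' / oddnum m ^ Suc (Suc j)"
    unfolding Suc.IH by simp
  finally show ?case .
qed

lemma Ecoef_expansion_of_one:
  assumes "1 \<le> p"
  shows "(\<Sum>k=1..p. Ecoef p k * (-4 * (-1) ^ k / oddnum k)) = 1"
proof -
  define h :: "nat \<Rightarrow> real" where "h q = (if q = 1 then 4 else 0)" for q
  have "(\<Sum>k=1..p. Ecoef p k * (-4 * (-1) ^ k / oddnum k)) = (\<Sum>q=1..p. Ecoef q 1 * h q / oddnum q ^ 2)"
  proof (rule Ecoef_expansion)
    fix q :: nat assume "1 \<le> q"
    have "(\<Sum>k=1..q. real ((2 * q - 1) choose (q - k)) * (-4 * (-1) ^ k / oddnum k) * oddnum k ^ 2)
        = -4 * (\<Sum>k=1..q. (-1) ^ k * real ((2 * q - 1) choose (q - k)) * oddnum k)"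
      unfolding sum_distrib_left by (rule sum.cong) (simp_all add: power2_eq_square)
    also have "\<dots> = real ((2 * q - 1) choose (q - 1)) * h q"
    proof (cases "q = 1")
      case False
      with \<open>1 \<le> q\<close> have "2 \<le> q"
        by simp
      with False show ?thesis
        unfolding alternating_choose_sum_oddnum[OF \<open>2 \<le> q\<close>] by (simp add: h_def)
    qed (simp add: h_def oddnum_def)
    finally show "(\<Sum>k=1..q. real ((2 * q - 1) choose (q - k)) * (-4 * (-1) ^ k / oddnum k) * oddnum k ^ 2)
        = real ((2 * q - 1) choose (q - 1)) * h q" .
  qed simp
  also have "\<dots> = (\<Sum>q=1..p. if q = 1 then 4 * Ecoef 1 1 else 0)"
    by (rule sum.cong) (simp_all add: h_def oddnum_def)
  also have "\<dots> = 1"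
    using assms by (simp add: Ecoef_def rho_def)
  finally show ?thesis .
qed

lemma Ecoef_expansion_inverse:
  assumes "1 \<le> k'"
  shows "(\<Sum>q=k'..p. Ecoef q k' / oddnum q) = oddnum k' * (\<Sum>k=k'..p. Ecoef p k * (Vsharp k k' [] / oddnum k ^ 2))"
proof -
  have "(\<Sum>k=k'..p. Ecoef p k * (Vsharp k k' [] / oddnum k ^ 2)) = (\<Sum>q=k'..p. Ecoef q k' * (oddnum q / oddnum k') / oddnum q ^ 2)"
  proof (rule Ecoef_expansion[OF assms])
    fix q assume "k' \<le> q"
    have "(\<Sum>k=k'..q. real ((2 * q - 1) choose (q - k)) * (Vsharp k k' [] / oddnum k ^ 2) * oddnum k ^ 2)
        = (\<Sum>k=k'..q. real ((2 * q - 1) choose (q - k)) * Vsharp k k' [])"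
      by (rule sum.cong) simp_all
    then show "(\<Sum>k=k'..q. real ((2 * q - 1) choose (q - k)) * (Vsharp k k' [] / oddnum k ^ 2) * oddnum k ^ 2)
        = real ((2 * q - 1) choose (q - k')) * (oddnum q / oddnum k')"
      unfolding choose_sum_Vsharp_Nil[OF assms \<open>k' \<le> q\<close>] by simp
  qed
  also have "\<dots> = (\<Sum>q=k'..p. Ecoef q k' / oddnum q) / oddnum k'"
    unfolding sum_divide_distrib by (rule sum.cong) (simp_all add: power2_eq_square)
  finally show ?thesis
    by simp
qed

lemma Ecoef_expansion_inverse_power:
  assumes "1 \<le> k'"
  shows "(-1) ^ k' * (\<Sum>q=k'..p. Ecoef q k' / oddnum q ^ (j + 3))
       = (\<Sum>k=k'..p. Ecoef p k * ((-1) ^ k * Vsharp k k' (replicate j 1) / oddnum k ^ 3))"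
proof -
  have "(\<Sum>k=k'..p. Ecoef p k * ((-1) ^ k * Vsharp k k' (replicate j 1) / oddnum k ^ 3))
      = (\<Sum>q=k'..p. Ecoef q k' * ((-1) ^ k' / oddnum q ^ Suc j) / oddnum q ^ 2)"
  proof (rule Ecoef_expansion[OF assms])
    fix q assume "k' \<le> q"
    have "(\<Sum>k=k'..q. real ((2 * q - 1) choose (q - k)) * ((-1) ^ k * Vsharp k k' (replicate j 1) / oddnum k ^ 3) * oddnum k ^ 2)
        = (\<Sum>k=k'..q. (-1) ^ k * real ((2 * q - 1) choose (q - k)) * Vsharp k k' (replicate j 1) / oddnum k)"
      by (rule sum.cong) (simp_all add: power2_eq_square power3_eq_cube)
    then show "(\<Sum>k=k'..q. real ((2 * q - 1) choose (q - k)) * ((-1) ^ k * Vsharp k k' (replicate j 1) / oddnum k ^ 3) * oddnum k ^ 2)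
        = real ((2 * q - 1) choose (q - k')) * ((-1) ^ k' / oddnum q ^ Suc j)"
      unfolding alternating_choose_sum_Vsharp[OF assms \<open>k' \<le> q\<close>] by simp
  qed
  also have "\<dots> = (-1) ^ k' * (\<Sum>q=k'..p. Ecoef q k' / oddnum q ^ (j + 3))"
    unfolding sum_distrib_left by (rule sum.cong) (simp_all add: power2_eq_square power_add power3_eq_cube field_simps)
  finally show ?thesis
    by simp
qed

section \<open>The factors of the closed form\<close>

(* The factor of index i of the theorem is chain_factor c_i c_(i+1) z_i k_(i-1) k_i;
   its numerator factor_num does not depend on z_i. *)
definition factor_num :: "nat \<Rightarrow> nat \<Rightarrow> nat \<Rightarrow> nat \<Rightarrow> real" where
  "factor_num cp cn kp k = (-1) ^ (k * (delta cp + delta cn)) * oddnum k powi (int (delta cp + delta cn) - 1)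
     * Vsharp kp k (replicate (cp - 3) 1)"

lemma oddnum_powi_pred: "oddnum k powi (int n - 1) = (oddnum k ^ n / oddnum k :: real)"
  by (simp add: power_int_diff)

lemma factor_num_eq:
  "factor_num cp cn kp k = (-1) ^ (k * (delta cp + delta cn)) * oddnum k ^ (delta cp + delta cn) / oddnum k
     * Vsharp kp k (replicate (cp - 3) 1)"
  unfolding factor_num_def oddnum_powi_pred by simp

definition chain_factor :: "nat \<Rightarrow> nat \<Rightarrow> complex \<Rightarrow> nat \<Rightarrow> nat \<Rightarrow> complex" where
  "chain_factor cp cn z kp k = of_real (factor_num cp cn kp k) / (oddnum k ^ 2 - z ^ 2)"

lemma chain_factor_eq:
  "chain_factor cp cn z kp k =
    (let \<delta> = delta cp + delta cn; w = 2 * of_nat k - (1::complex)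
     in (- 1) ^ (k * \<delta>) * w powi (int \<delta> - 1) / (w ^ 2 - z ^ 2) * of_real (Vsharp kp k (replicate (cp - 3) 1)))"
  unfolding chain_factor_def factor_num_def Let_def by (simp add: oddnum_def)

lemma factor_num_first:
  assumes "1 \<le> k"
  shows "factor_num 1 cn 0 k = -2 * (-1) ^ k * (-1) ^ (k * delta cn) * oddnum k ^ delta cn / oddnum k"
proof -
  have "Vsharp 0 k [] = -2 / oddnum k"
    using assms by (simp add: Vsharp_eq tri_def oddnum_def)
  moreover have "delta 1 + delta cn = Suc (delta cn)"
    by (simp add: delta_def)
  ultimately show ?thesis
    unfolding factor_num_eq by (simp add: mult_Suc_right power_add)
qed

lemma factor_num_expansion_of_one:
  assumes "1 \<le> p"
  shows "(\<Sum>k=1..p. Ecoef p k * (2 * factor_num 1 0 0 k / oddnum k ^ 2)) = 1"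
proof -
  have "(\<Sum>k=1..p. Ecoef p k * (2 * factor_num 1 0 0 k / oddnum k ^ 2))
      = (\<Sum>k=1..p. Ecoef p k * (-4 * (-1) ^ k / oddnum k))"
  proof (rule sum.cong)
    fix k assume "k \<in> {1..p}"
    then have "1 \<le> k"
      by simp
    then have "factor_num 1 0 0 k = -2 * (-1) ^ k * oddnum k"
      unfolding factor_num_first[OF \<open>1 \<le> k\<close>] by (simp add: delta_def power2_eq_square)
    then show "Ecoef p k * (2 * factor_num 1 0 0 k / oddnum k ^ 2) = Ecoef p k * (-4 * (-1) ^ k / oddnum k)"
      by (simp add: power2_eq_square)
  qed simp
  then show ?thesis
    using Ecoef_expansion_of_one[OF assms] by simp
qed

lemma factor_num_expansion_index_one:
  assumes "1 \<le> k'"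
  shows "factor_num 1 cn 0 k' * (\<Sum>q=k'..p. Ecoef q k' / oddnum q)
       = (\<Sum>k=k'..p. Ecoef p k * (factor_num 1 1 0 k / oddnum k ^ 2) * factor_num 1 cn k k')"
proof -
  define \<kappa> :: real where "\<kappa> = (-1) ^ (k' * Suc (delta cn)) * oddnum k' ^ delta cn"
  have "Ecoef p k * (factor_num 1 1 0 k / oddnum k ^ 2) * factor_num 1 cn k k'
      = -2 * \<kappa> * (Ecoef p k * (Vsharp k k' [] / oddnum k ^ 2))" if "k \<in> {k'..p}" for k
  proof -
    have "1 \<le> k"
      using that assms by simp
    then have "factor_num 1 1 0 k = -2"
      unfolding factor_num_first[OF \<open>1 \<le> k\<close>] by (simp add: delta_def)
    moreover have "factor_num 1 cn k k' = \<kappa> * Vsharp k k' []"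
      unfolding factor_num_eq \<kappa>_def by (simp add: delta_def)
    ultimately show ?thesis
      by simp
  qed
  then have "(\<Sum>k=k'..p. Ecoef p k * (factor_num 1 1 0 k / oddnum k ^ 2) * factor_num 1 cn k k')
      = -2 * \<kappa> * (\<Sum>k=k'..p. Ecoef p k * (Vsharp k k' [] / oddnum k ^ 2))"
    by (simp add: sum_distrib_left)
  also have "\<dots> = factor_num 1 cn 0 k' * (\<Sum>q=k'..p. Ecoef q k' / oddnum q)"
    unfolding factor_num_first[OF assms] Ecoef_expansion_inverse[OF assms] \<kappa>_def
    by (simp add: mult_Suc_right power_add)
  finally show ?thesis ..
qed

lemma factor_num_expansion_index_ge_three:
  assumes "3 \<le> c" "1 \<le> k'"
  shows "factor_num 1 cn 0 k' * (\<Sum>q=k'..p. Ecoef q k' / oddnum q ^ c)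
       = (\<Sum>k=k'..p. Ecoef p k * (factor_num 1 c 0 k / oddnum k ^ 2) * factor_num c cn k k')"
proof -
  define \<kappa> :: real where "\<kappa> = (-1) ^ (k' * delta cn) * oddnum k' ^ delta cn / oddnum k'"
  have "Ecoef p k * (factor_num 1 c 0 k / oddnum k ^ 2) * factor_num c cn k k'
      = -2 * \<kappa> * (Ecoef p k * ((-1) ^ k * Vsharp k k' (replicate (c - 3) 1) / oddnum k ^ 3))" if "k \<in> {k'..p}" for k
  proof -
    have "1 \<le> k"
      using that assms(2) by simp
    then have "factor_num 1 c 0 k = -2 * (-1) ^ k / oddnum k"
      using assms(1) unfolding factor_num_first[OF \<open>1 \<le> k\<close>] by (simp add: delta_def)
    moreover have "factor_num c cn k k' = \<kappa> * Vsharp k k' (replicate (c - 3) 1)"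
      using assms(1) unfolding factor_num_eq \<kappa>_def by (simp add: delta_def)
    ultimately show ?thesis
      by (simp add: power2_eq_square power3_eq_cube mult_ac)
  qed
  then have "(\<Sum>k=k'..p. Ecoef p k * (factor_num 1 c 0 k / oddnum k ^ 2) * factor_num c cn k k')
      = -2 * \<kappa> * (\<Sum>k=k'..p. Ecoef p k * ((-1) ^ k * Vsharp k k' (replicate (c - 3) 1) / oddnum k ^ 3))"
    by (simp add: sum_distrib_left)
  also have "\<dots> = -2 * (-1) ^ k' * \<kappa> * (\<Sum>q=k'..p. Ecoef q k' / oddnum q ^ (c - 3 + 3))"
    unfolding Ecoef_expansion_inverse_power[OF assms(2), symmetric] by simp
  also have "\<dots> = factor_num 1 cn 0 k' * (\<Sum>q=k'..p. Ecoef q k' / oddnum q ^ c)"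
    unfolding factor_num_first[OF assms(2)] \<kappa>_def using assms(1) by simp
  finally show ?thesis ..
qed

lemma factor_num_expansion:
  assumes "c = 1 \<or> 3 \<le> c" "1 \<le> k'"
  shows "factor_num 1 cn 0 k' * (\<Sum>q=k'..p. Ecoef q k' / oddnum q ^ c)
       = (\<Sum>k=k'..p. Ecoef p k * (factor_num 1 c 0 k / oddnum k ^ 2) * factor_num c cn k k')"
  using assms factor_num_expansion_index_one[OF assms(2)] factor_num_expansion_index_ge_three[OF _ assms(2)]
  by auto

section \<open>Prepending twos and the geometric series\<close>

definition prepend_two :: "(nat \<Rightarrow> complex) \<Rightarrow> nat \<Rightarrow> complex" where
  "prepend_two f m = (\<Sum>l=1..m. f l / oddnum l ^ 2)"

lemma tstar_replicate_two:
  "of_real (tstar m (replicate x 2 @ s)) * \<zeta> = (prepend_two ^^ x) (\<lambda>p. of_real (tstar p s) * \<zeta>) m"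
proof (induction x arbitrary: m)
  case (Suc x)
  have "of_real (tstar m (replicate (Suc x) 2 @ s)) * \<zeta>
      = (\<Sum>k=1..m. of_real (tstar k (replicate x 2 @ s)) * \<zeta> / oddnum k ^ 2)"
    by (simp add: sum_distrib_right oddnum_def)
  then show ?case
    by (simp add: Suc.IH prepend_two_def)
qed simp

lemma prepend_two_pow_expansion:
  assumes "\<And>p. 1 \<le> p \<Longrightarrow> u p = (\<Sum>k=1..p. of_real (Ecoef p k) * \<psi> k)" "1 \<le> m"
  shows "(prepend_two ^^ x) u m = (\<Sum>k=1..m. of_real (Ecoef m k) * \<psi> k / (oddnum k ^ 2) ^ x)"
  using assms(2)
proof (induction x arbitrary: m)
  case 0
  then show ?case
    using assms(1) by simp
next
  case (Suc x)
  have "(prepend_two ^^ Suc x) u m = (\<Sum>l=1..m. (prepend_two ^^ x) u l / oddnum l ^ 2)"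
    by (simp add: prepend_two_def)
  also have "\<dots> = (\<Sum>l=1..m. \<Sum>k=1..l. of_real (Ecoef l k) * \<psi> k / (oddnum k ^ 2) ^ x / oddnum l ^ 2)"
  proof (rule sum.cong)
    fix l assume "l \<in> {1..m}"
    then show "(prepend_two ^^ x) u l / oddnum l ^ 2
        = (\<Sum>k=1..l. of_real (Ecoef l k) * \<psi> k / (oddnum k ^ 2) ^ x / oddnum l ^ 2)"
      by (simp add: Suc.IH sum_divide_distrib)
  qed simp
  also have "\<dots> = (\<Sum>k=1..m. \<psi> k / (oddnum k ^ 2) ^ x * of_real (\<Sum>l=k..m. Ecoef l k / oddnum l ^ 2))"
    unfolding sum_triangle_swap of_real_sum sum_distrib_left
    by (intro sum.cong refl) (simp add: field_simps)
  also have "\<dots> = (\<Sum>k=1..m. of_real (Ecoef m k) * \<psi> k / (oddnum k ^ 2) ^ Suc x)"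
    by (rule sum.cong) (simp_all add: sum_Ecoef_div_oddnum_sq field_simps)
  finally show ?case .
qed

lemma has_sum_sum:
  fixes f :: "'i \<Rightarrow> 'b \<Rightarrow> 'a::topological_comm_monoid_add"
  assumes "finite I" "\<And>i. i \<in> I \<Longrightarrow> (f i has_sum s i) A"
  shows "((\<lambda>x. \<Sum>i\<in>I. f i x) has_sum (\<Sum>i\<in>I. s i)) A"
  using assms by (induction I rule: finite_induct) (auto intro!: has_sum_add)

lemma has_sum_geometric:
  fixes q :: "'a::{real_normed_field, banach}"
  assumes "norm q < 1"
  shows "((\<lambda>x. q ^ x) has_sum (1 / (1 - q))) UNIV"
proof (rule norm_summable_imp_has_sum)
  show "summable (\<lambda>n. norm (q ^ n))"
    using assms by (simp add: norm_power summable_geometric)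
  show "(\<lambda>n. q ^ n) sums (1 / (1 - q))"
    using geometric_sums[OF assms] by simp
qed

lemma has_sum_SigmaI_norm:
  fixes f :: "'a \<times> 'b \<Rightarrow> 'c::banach"
  assumes "\<And>x. x \<in> A \<Longrightarrow> ((\<lambda>y. f (x, y)) has_sum g x) B" "(g has_sum s) A"
    and "\<And>x. x \<in> A \<Longrightarrow> ((\<lambda>y. norm (f (x, y))) has_sum g' x) B" "g' summable_on A"
  shows "(f has_sum s) (A \<times> B)"
proof -
  have "(\<lambda>p. norm (f p)) summable_on A \<times> B"
    by (rule summable_on_SigmaI[where f = "\<lambda>p. norm (f p)"]) (use assms(3,4) in auto)
  then have "f summable_on A \<times> B"
    by (rule abs_summable_summable)
  then show ?thesis
    using assms(1,2) by (rule has_sum_SigmaI[rotated 2])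
qed

lemma norm_div_oddnum_sq_less:
  assumes "norm z < 1" "1 \<le> k"
  shows "norm (z ^ 2 / oddnum k ^ 2 :: complex) < 1"
proof -
  have "norm (z ^ 2 / oddnum k ^ 2 :: complex) = (norm z / oddnum k) ^ 2"
    using assms(2) by (simp add: norm_divide norm_power norm_oddnum power_divide)
  also have "\<dots> < 1"
    using assms one_le_oddnum[OF assms(2)] by (simp add: power_less_one_iff divide_less_eq abs_less_iff)
  finally show ?thesis .
qed

lemma oddnum_sq_minus_nonzero:
  assumes "norm z < 1" "1 \<le> k"
  shows "oddnum k ^ 2 - z ^ 2 \<noteq> (0::complex)"
proof
  assume "oddnum k ^ 2 - z ^ 2 = 0"
  then have "z ^ 2 = oddnum k ^ 2"
    by simp
  then have "z ^ 2 / oddnum k ^ 2 = 1"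
    by simp
  then show False
    using norm_div_oddnum_sq_less[OF assms] by simp
qed

lemma has_sum_prepend_two_pow:
  assumes "\<And>p. 1 \<le> p \<Longrightarrow> ((\<lambda>b. F b p) has_sum H p) B" "1 \<le> m"
  shows "((\<lambda>b. (prepend_two ^^ x) (F b) m) has_sum (prepend_two ^^ x) H m) B"
  using assms(2)
proof (induction x arbitrary: m)
  case (Suc x)
  then show ?case
    unfolding funpow.simps o_apply prepend_two_def
    by (intro has_sum_sum has_sum_divide_const) auto
qed (simp add: assms(1))


lemma has_sum_geometric_prepend_two:
  assumes "norm z < 1" "1 \<le> m"
    and "\<And>p. 1 \<le> p \<Longrightarrow> u p = (\<Sum>k=1..p. of_real (Ecoef p k) * \<psi> k)"
  shows "((\<lambda>x. (z ^ 2) ^ x * (prepend_two ^^ x) u m)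
           has_sum (\<Sum>k=1..m. of_real (Ecoef m k) * \<psi> k * oddnum k ^ 2 / (oddnum k ^ 2 - z ^ 2))) UNIV"
proof -
  have expansion: "(prepend_two ^^ x) u m = (\<Sum>k=1..m. of_real (Ecoef m k) * \<psi> k / (oddnum k ^ 2) ^ x)" for x
    by (rule prepend_two_pow_expansion) (use assms in auto)
  have termwise: "(z ^ 2) ^ x * (prepend_two ^^ x) u m = (\<Sum>k=1..m. of_real (Ecoef m k) * \<psi> k * (z ^ 2 / oddnum k ^ 2) ^ x)" for x
    unfolding expansion sum_distrib_left by (intro sum.cong refl) (simp add: power_divide)
  have geometric: "((\<lambda>x. of_real (Ecoef m k) * \<psi> k * (z ^ 2 / oddnum k ^ 2) ^ x)
      has_sum (of_real (Ecoef m k) * \<psi> k * oddnum k ^ 2 / (oddnum k ^ 2 - z ^ 2))) UNIV" if "k \<in> {1..m}" for k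
  proof -
    have "1 \<le> k"
      using that by simp
    then have "1 / (1 - z ^ 2 / oddnum k ^ 2) = oddnum k ^ 2 / (oddnum k ^ 2 - z ^ 2)"
      using oddnum_sq_minus_nonzero[OF assms(1)] by (simp add: field_simps)
    then have "((\<lambda>x. (z ^ 2 / oddnum k ^ 2) ^ x) has_sum (oddnum k ^ 2 / (oddnum k ^ 2 - z ^ 2))) UNIV"
      using has_sum_geometric[OF norm_div_oddnum_sq_less[OF assms(1) \<open>1 \<le> k\<close>]] by simp
    from has_sum_cmult_right[OF this, of "of_real (Ecoef m k) * \<psi> k"] show ?thesis
      by simp
  qed
  show ?thesis
    unfolding termwise by (rule has_sum_sum) (simp_all add: geometric)
qed

(* c_1, with the convention c_(d+1) = 0 of the theorem *)
definition cnext :: "nat \<Rightarrow> (nat \<Rightarrow> nat) \<Rightarrow> nat" where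
  "cnext d c = (if d = 0 then 0 else c 1)"

(* The sum over k >= k_1 >= ... >= k_d >= 1 of the factors of indices 1, ..., d. *)
primrec chain_sum :: "nat \<Rightarrow> (nat \<Rightarrow> nat) \<Rightarrow> (nat \<Rightarrow> complex) \<Rightarrow> nat \<Rightarrow> complex" where
  "chain_sum 0 c z k = 1"
| "chain_sum (Suc d) c z k =
     (\<Sum>k'=1..k. chain_factor (c 1) (cnext d (c \<circ> Suc)) (z 1) k k' * chain_sum d (c \<circ> Suc) (z \<circ> Suc) k')"

definition chain_index :: "nat \<Rightarrow> nat \<Rightarrow> (nat \<Rightarrow> nat) \<Rightarrow> nat \<Rightarrow> nat" where
  "chain_index d cp c j = (if j = 0 then cp else if j = Suc d then 0 else c j)"

definition chain_prod :: "nat \<Rightarrow> nat \<Rightarrow> (nat \<Rightarrow> nat) \<Rightarrow> (nat \<Rightarrow> complex) \<Rightarrow> nat \<Rightarrow> (nat \<Rightarrow> nat) \<Rightarrow> complex" where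
  "chain_prod d cp c z kp k = (\<Prod>i\<le>d. chain_factor (chain_index d cp c i) (chain_index d cp c (Suc i)) (z i)
     (if i = 0 then kp else k (i - 1)) (k i))"

lemma inj_case_nat: "inj (\<lambda>(x, b). case_nat x b)"
proof (rule injI, clarify)
  fix x b y e
  assume eq: "case_nat x b = case_nat y e"
  from fun_cong[OF eq, of 0] have "x = y"
    by simp
  moreover have "b = e"
  proof
    fix i
    show "b i = e i"
      using fun_cong[OF eq, of "Suc i"] by simp
  qed
  ultimately show "x = y \<and> b = e" ..
qed

lemma inj_case_nat_const: "inj (\<lambda>x. case_nat x b)"
  by (rule injI) (drule fun_cong[of _ _ 0], simp)

lemma case_nat_0_Suc: "case_nat (a 0) (a \<circ> Suc) = a"
  by (rule ext) (simp split: nat.split)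

lemma chains_le_first:
  assumes "k \<in> chains n d" "i \<le> d"
  shows "k i \<le> k 0"
  using assms(2)
proof (induction i)
  case (Suc i)
  then have "k (Suc i) \<le> k i"
    using assms(1) unfolding chains_def by simp
  with Suc show ?case
    by simp
qed simp

lemma chains_0: "chains n 0 = (\<lambda>k0. case_nat k0 (\<lambda>_. 0)) ` {1..n}"
proof (intro equalityI subsetI)
  fix k assume "k \<in> chains n 0"
  then have "k = case_nat (k 0) (\<lambda>_. 0)" "k 0 \<in> {1..n}"
    unfolding chains_def by (auto split: nat.split)
  then show "k \<in> (\<lambda>k0. case_nat k0 (\<lambda>_. 0)) ` {1..n}"
    by blast
qed (auto simp: chains_def split: nat.split)

lemma chains_Suc: "chains n (Suc d) = (\<lambda>(k0, k'). case_nat k0 k') ` Sigma {1..n} (\<lambda>k0. chains k0 d)"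
proof (intro equalityI subsetI)
  fix k assume k: "k \<in> chains n (Suc d)"
  then have "k 0 \<in> {1..n}" "k \<circ> Suc \<in> chains (k 0) d"
    using chains_le_first[OF k] unfolding chains_def by auto
  then show "k \<in> (\<lambda>(k0, k'). case_nat k0 k') ` Sigma {1..n} (\<lambda>k0. chains k0 d)"
    by (intro image_eqI[where x = "(k 0, k \<circ> Suc)"]) (simp_all add: case_nat_0_Suc)
next
  fix k assume "k \<in> (\<lambda>(k0, k'). case_nat k0 k') ` Sigma {1..n} (\<lambda>k0. chains k0 d)"
  then obtain k0 k' where "k = case_nat k0 k'" "k0 \<in> {1..n}" "k' \<in> chains k0 d"
    by force
  then show "k \<in> chains n (Suc d)"
    unfolding chains_def by (auto simp: less_Suc_eq_0_disj split: nat.split)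
qed

lemma finite_chains: "finite (chains n d)"
  by (induction d arbitrary: n) (simp_all add: chains_0 chains_Suc)

lemma sum_chains_Suc:
  "(\<Sum>k\<in>chains n (Suc d). f k) = (\<Sum>k0=1..n. \<Sum>k'\<in>chains k0 d. f (case_nat k0 k'))"
  unfolding chains_Suc
  by (subst sum.reindex) (auto intro: inj_on_subset[OF inj_case_nat] simp: sum.Sigma finite_chains split_beta)

lemma chain_prod_Suc:
  "chain_prod (Suc d) cp c z kp (case_nat k0 k')
     = chain_factor cp (c 1) (z 0) kp k0 * chain_prod d (c 1) (c \<circ> Suc) (z \<circ> Suc) k0 k'"
  unfolding chain_prod_def prod.atMost_Suc_shift
  by (intro arg_cong2[where f = "(*)"] prod.cong refl) (auto simp: chain_index_def split: nat.split)

lemma sum_chains_nested: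
  "(\<Sum>k\<in>chains n d. h (k 0) * chain_prod d cp c z kp k)
     = (\<Sum>k0=1..n. h k0 * chain_factor cp (cnext d c) (z 0) kp k0 * chain_sum d c z k0)"
proof (induction d arbitrary: n cp c z kp h)
  case 0
  show ?case
    unfolding chains_0
    by (subst sum.reindex) (auto intro: inj_on_subset[OF inj_case_nat_const] simp: chain_prod_def chain_index_def cnext_def)
next
  case (Suc d)
  have inner: "(\<Sum>k'\<in>chains k0 d. chain_prod d (c 1) (c \<circ> Suc) (z \<circ> Suc) k0 k') = chain_sum (Suc d) c z k0" for k0
    using Suc.IH[where h = "\<lambda>_. 1" and n = k0 and cp = "c 1" and c = "c \<circ> Suc" and z = "z \<circ> Suc" and kp = k0]
    by (simp add: comp_def)
  have "(\<Sum>k\<in>chains n (Suc d). h (k 0) * chain_prod (Suc d) cp c z kp k)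
      = (\<Sum>k0=1..n. h k0 * chain_factor cp (c 1) (z 0) kp k0 * (\<Sum>k'\<in>chains k0 d. chain_prod d (c 1) (c \<circ> Suc) (z \<circ> Suc) k0 k'))"
    unfolding sum_chains_Suc chain_prod_Suc by (simp add: sum_distrib_left mult.assoc)
  also have "\<dots> = (\<Sum>k0=1..n. h k0 * chain_factor cp (cnext (Suc d) c) (z 0) kp k0 * chain_sum (Suc d) c z k0)"
    unfolding inner by (simp add: cnext_def)
  finally show ?case .
qed

section \<open>The generating function\<close>

(* The right-hand side of the theorem for n = m, in nested form (see G_closed_eq_sum_chains). *)
definition G_closed :: "nat \<Rightarrow> (nat \<Rightarrow> nat) \<Rightarrow> (nat \<Rightarrow> complex) \<Rightarrow> nat \<Rightarrow> complex" where
  "G_closed d c z m = (\<Sum>k=1..m. 2 * of_real (Ecoef m k) * chain_factor 1 (cnext d c) (z 0) 0 k * chain_sum d c z k)"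

lemma has_sum_G_closed_geometric:
  assumes "norm z0 < 1" "1 \<le> m"
    and "\<And>p. 1 \<le> p \<Longrightarrow> u p = (\<Sum>k=1..p. of_real (Ecoef p k * (2 * factor_num 1 cn 0 k / oddnum k ^ 2)) * Y k)"
  shows "((\<lambda>x. (z0 ^ 2) ^ x * (prepend_two ^^ x) u m)
           has_sum (\<Sum>k=1..m. 2 * of_real (Ecoef m k) * chain_factor 1 cn z0 0 k * Y k)) UNIV"
proof -
  let ?\<psi> = "\<lambda>k. of_real (2 * factor_num 1 cn 0 k / oddnum k ^ 2) * Y k"
  have "((\<lambda>x. (z0 ^ 2) ^ x * (prepend_two ^^ x) u m)
      has_sum (\<Sum>k=1..m. of_real (Ecoef m k) * ?\<psi> k * oddnum k ^ 2 / (oddnum k ^ 2 - z0 ^ 2))) UNIV"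
    by (rule has_sum_geometric_prepend_two[OF assms(1,2)]) (simp add: assms(3) mult.assoc)
  moreover have "(\<Sum>k=1..m. of_real (Ecoef m k) * ?\<psi> k * oddnum k ^ 2 / (oddnum k ^ 2 - z0 ^ 2))
      = (\<Sum>k=1..m. 2 * of_real (Ecoef m k) * chain_factor 1 cn z0 0 k * Y k)"
    by (rule sum.cong) (simp_all add: chain_factor_def)
  ultimately show ?thesis
    by simp
qed

lemma gexps_0: "gexps 0 = range (\<lambda>x. case_nat x (\<lambda>_. 0))"
proof (intro equalityI subsetI)
  fix a assume "a \<in> gexps 0"
  then have "a = case_nat (a 0) (\<lambda>_. 0)"
    unfolding gexps_def by (auto split: nat.split)
  then show "a \<in> range (\<lambda>x. case_nat x (\<lambda>_. 0))"
    by blast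
qed (auto simp: gexps_def split: nat.split)

lemma gexps_Suc: "gexps (Suc d) = (\<lambda>(x, b). case_nat x b) ` (UNIV \<times> gexps d)"
proof (intro equalityI subsetI)
  fix a assume "a \<in> gexps (Suc d)"
  then show "a \<in> (\<lambda>(x, b). case_nat x b) ` (UNIV \<times> gexps d)"
    by (intro image_eqI[where x = "(a 0, a \<circ> Suc)"]) (auto simp: gexps_def case_nat_0_Suc)
qed (auto simp: gexps_def split: nat.split)

lemma gidx_Suc: "gidx (Suc d) c a = replicate (a 0) 2 @ c 1 # gidx d (c \<circ> Suc) (a \<circ> Suc)"
proof -
  have "[1..<Suc (Suc d)] = 1 # map Suc [1..<Suc d]"
    by (simp add: map_Suc_upt upt_conv_Cons del: upt_Suc)
  then show ?thesis
    unfolding gidx_def by (simp add: o_def del: upt_Suc)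
qed

lemma tstar_nonneg: "0 \<le> tstar n s"
  by (induction s arbitrary: n) (auto intro!: sum_nonneg divide_nonneg_pos)

lemma norm_Gterm: "norm (Gterm m d c z a) = Re (Gterm m d c (\<lambda>j. of_real (norm (z j))) a)"
  using tstar_nonneg[of m "gidx d c a"]
  by (simp add: Gterm_def norm_mult prod_norm[symmetric] norm_power flip: of_real_power of_real_prod)

lemma Gterm_0_case_nat: "Gterm m 0 c z (case_nat x b) = (z 0 ^ 2) ^ x * (prepend_two ^^ x) (\<lambda>_. 1) m"
proof -
  have "z 0 ^ (2 * case_nat x b 0) = (z 0 ^ 2) ^ x"
    by (simp add: power_mult)
  then show ?thesis
    using tstar_replicate_two[of m x "[]" 1] by (simp add: Gterm_def gidx_def mult.commute)
qed

lemma tstar_Cons_times: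
  fixes \<zeta> :: complex
  shows "of_real (tstar p (c # s)) * \<zeta> = (\<Sum>q=1..p. of_real (tstar q s) * \<zeta> / oddnum q ^ c)"
  by (simp add: sum_distrib_right oddnum_def)

lemma Gterm_Suc_case_nat:
  "Gterm m (Suc d) c z (case_nat x b)
     = (z 0 ^ 2) ^ x * (prepend_two ^^ x) (\<lambda>p. \<Sum>q=1..p. Gterm q d (c \<circ> Suc) (z \<circ> Suc) b / oddnum q ^ c 1) m"
proof -
  let ?\<zeta> = "\<Prod>j\<le>d. (z \<circ> Suc) j ^ (2 * b j)"
  have "Gterm m (Suc d) c z (case_nat x b)
      = (z 0 ^ 2) ^ x * (of_real (tstar m (replicate x 2 @ c 1 # gidx d (c \<circ> Suc) b)) * ?\<zeta>)"
    unfolding Gterm_def gidx_Suc prod.atMost_Suc_shift by (simp add: o_def power_mult)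
  then show ?thesis
    unfolding tstar_replicate_two tstar_Cons_times by (simp add: Gterm_def)
qed

lemma has_sum_Gterm_0:
  assumes "norm (z 0) < 1" "1 \<le> m"
  shows "(Gterm m 0 c z has_sum G_closed 0 c z m) (gexps 0)"
proof -
  have one: "(\<lambda>_. 1) p = (\<Sum>k=1..p. of_real (Ecoef p k * (2 * factor_num 1 0 0 k / oddnum k ^ 2)) * (\<lambda>_. 1::complex) k)"
    if "1 \<le> p" for p
    unfolding mult_1_right of_real_sum[symmetric] factor_num_expansion_of_one[OF that] by simp
  have "((\<lambda>x. (z 0 ^ 2) ^ x * (prepend_two ^^ x) (\<lambda>_. 1) m) has_sum G_closed 0 c z m) UNIV"
    using has_sum_G_closed_geometric[OF assms one] by (simp add: G_closed_def cnext_def)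
  then show ?thesis
    unfolding gexps_0 by (subst has_sum_reindex) (simp_all add: inj_case_nat_const o_def Gterm_0_case_nat)
qed

lemma has_sum_Gterm_Suc_slice:
  assumes "\<And>q. 1 \<le> q \<Longrightarrow> (Gterm q d (c \<circ> Suc) (z \<circ> Suc) has_sum G_closed d (c \<circ> Suc) (z \<circ> Suc) q) (gexps d)"
    and "1 \<le> m"
  shows "((\<lambda>b. Gterm m (Suc d) c z (case_nat x b)) has_sum
           (z 0 ^ 2) ^ x * (prepend_two ^^ x) (\<lambda>p. \<Sum>q=1..p. G_closed d (c \<circ> Suc) (z \<circ> Suc) q / oddnum q ^ c 1) m) (gexps d)"
  unfolding Gterm_Suc_case_nat
  by (intro has_sum_cmult_right has_sum_prepend_two_pow[OF _ assms(2)] has_sum_sum has_sum_divide_const assms(1)) auto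

lemma G_closed_step_expansion:
  assumes "c 1 = 1 \<or> 3 \<le> c 1"
  shows "(\<Sum>q=1..p. G_closed d (c \<circ> Suc) (z \<circ> Suc) q / oddnum q ^ c 1)
       = (\<Sum>k=1..p. of_real (Ecoef p k * (2 * factor_num 1 (c 1) 0 k / oddnum k ^ 2)) * chain_sum (Suc d) c z k)"
proof -
  let ?cn = "cnext d (c \<circ> Suc)"
  let ?Y = "\<lambda>k'. 2 * chain_sum d (c \<circ> Suc) (z \<circ> Suc) k' / (oddnum k' ^ 2 - z 1 ^ 2)"
  have "(\<Sum>q=1..p. G_closed d (c \<circ> Suc) (z \<circ> Suc) q / oddnum q ^ c 1)
      = (\<Sum>q=1..p. \<Sum>k'=1..q. ?Y k' * of_real (factor_num 1 ?cn 0 k' * (Ecoef q k' / oddnum q ^ c 1)))"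
    unfolding G_closed_def sum_divide_distrib by (intro sum.cong refl) (simp add: chain_factor_def)
  also have "\<dots> = (\<Sum>k'=1..p. ?Y k' * of_real (factor_num 1 ?cn 0 k' * (\<Sum>q=k'..p. Ecoef q k' / oddnum q ^ c 1)))"
    unfolding sum_triangle_swap by (simp add: sum_distrib_left)
  also have "\<dots> = (\<Sum>k'=1..p. ?Y k' * of_real (\<Sum>k=k'..p. Ecoef p k * (factor_num 1 (c 1) 0 k / oddnum k ^ 2) * factor_num (c 1) ?cn k k'))"
  proof (rule sum.cong)
    fix k' assume "k' \<in> {1..p}"
    then have "1 \<le> k'"
      by simp
    show "?Y k' * of_real (factor_num 1 ?cn 0 k' * (\<Sum>q=k'..p. Ecoef q k' / oddnum q ^ c 1))
        = ?Y k' * of_real (\<Sum>k=k'..p. Ecoef p k * (factor_num 1 (c 1) 0 k / oddnum k ^ 2) * factor_num (c 1) ?cn k k')"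
      unfolding factor_num_expansion[OF assms \<open>1 \<le> k'\<close>] ..
  qed simp
  also have "\<dots> = (\<Sum>k=1..p. \<Sum>k'=1..k. of_real (Ecoef p k * (2 * factor_num 1 (c 1) 0 k / oddnum k ^ 2))
                     * (chain_factor (c 1) ?cn (z 1) k k' * chain_sum d (c \<circ> Suc) (z \<circ> Suc) k'))"
    unfolding sum_triangle_swap[symmetric] of_real_sum sum_distrib_left
    by (intro sum.cong refl) (simp add: chain_factor_def mult_ac)
  also have "\<dots> = (\<Sum>k=1..p. of_real (Ecoef p k * (2 * factor_num 1 (c 1) 0 k / oddnum k ^ 2)) * chain_sum (Suc d) c z k)"
    by (simp add: sum_distrib_left)
  finally show ?thesis .
qed

lemma has_sum_G_closed_Suc:
  assumes "c 1 = 1 \<or> 3 \<le> c 1" "norm (z 0) < 1" "1 \<le> m"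
  shows "((\<lambda>x. (z 0 ^ 2) ^ x * (prepend_two ^^ x) (\<lambda>p. \<Sum>q=1..p. G_closed d (c \<circ> Suc) (z \<circ> Suc) q / oddnum q ^ c 1) m)
           has_sum G_closed (Suc d) c z m) UNIV"
proof -
  have "((\<lambda>x. (z 0 ^ 2) ^ x * (prepend_two ^^ x) (\<lambda>p. \<Sum>q=1..p. G_closed d (c \<circ> Suc) (z \<circ> Suc) q / oddnum q ^ c 1) m)
      has_sum (\<Sum>k=1..m. 2 * of_real (Ecoef m k) * chain_factor 1 (c 1) (z 0) 0 k * chain_sum (Suc d) c z k)) UNIV"
    by (rule has_sum_G_closed_geometric[OF assms(2,3)]) (rule G_closed_step_expansion[where c = c, OF assms(1)])
  then show ?thesis
    by (simp add: G_closed_def cnext_def)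
qed

lemma has_sum_Gterm:
  assumes "\<forall>i\<in>{1..d}. 1 \<le> c i \<and> c i \<noteq> 2" "\<forall>j\<le>d. norm (z j) < 1" "1 \<le> m"
  shows "(Gterm m d c z has_sum G_closed d c z m) (gexps d)"
  using assms
proof (induction d arbitrary: c z m)
  case 0
  then show ?case
    by (intro has_sum_Gterm_0) auto
next
  case (Suc d)
  have c1: "c 1 = 1 \<or> 3 \<le> c 1"
    using Suc.prems(1) by force
  have IH: "(Gterm q d (c \<circ> Suc) (w \<circ> Suc) has_sum G_closed d (c \<circ> Suc) (w \<circ> Suc) q) (gexps d)"
    if "\<forall>j\<le>Suc d. norm (w j) < 1" "1 \<le> q" for w q
    using Suc.prems(1) that by (intro Suc.IH) auto
  define g where "g w x = (w 0 ^ 2) ^ x * (prepend_two ^^ x)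
    (\<lambda>p. \<Sum>q=1..p. G_closed d (c \<circ> Suc) (w \<circ> Suc) q / oddnum q ^ c 1) m" for w x
  have slice: "((\<lambda>b. Gterm m (Suc d) c w (case_nat x b)) has_sum g w x) (gexps d)"
    if "\<forall>j\<le>Suc d. norm (w j) < 1" for w x
    unfolding g_def by (rule has_sum_Gterm_Suc_slice[OF IH[OF that] Suc.prems(3)])
  have total: "(g w has_sum G_closed (Suc d) c w m) UNIV"
    if "\<forall>j\<le>Suc d. norm (w j) < 1" for w
    unfolding g_def by (rule has_sum_G_closed_Suc[where c = c, OF c1]) (use that Suc.prems(3) in auto)
  \<comment> \<open>The norms of the terms are the terms for |z_j|, which converge by the same argument.\<close>
  define za where "za = (\<lambda>j. complex_of_real (norm (z j)))"
  have za: "\<forall>j\<le>Suc d. norm (za j) < 1"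
    using Suc.prems(2) by (simp add: za_def)
  have "((\<lambda>(x, b). Gterm m (Suc d) c z (case_nat x b)) has_sum G_closed (Suc d) c z m) (UNIV \<times> gexps d)"
  proof (rule has_sum_SigmaI_norm)
    show "((\<lambda>b. norm ((\<lambda>(x, b). Gterm m (Suc d) c z (case_nat x b)) (x, b))) has_sum Re (g za x)) (gexps d)" for x
      using has_sum_Re[OF slice[OF za]] unfolding za_def by (simp add: norm_Gterm)
    show "(\<lambda>x. Re (g za x)) summable_on UNIV"
      using has_sum_Re[OF total[OF za]] by (rule has_sum_imp_summable)
  qed (use slice[OF Suc.prems(2)] total[OF Suc.prems(2)] in simp_all)
  then show ?case
    unfolding gexps_Suc has_sum_reindex[OF inj_on_subset[OF inj_case_nat subset_UNIV]]
    by (simp add: o_def case_prod_unfold)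
qed

lemma prefactor_times_choose:
  assumes "1 \<le> n"
  shows "real n * real (2 * n choose n) / 2 ^ (4 * n - 2) * real ((2 * n - 1) choose (n - k)) = 2 * Ecoef n k"
proof -
  have exponent: "4 * n = (4 * n - 2) + 2"
    using assms by simp
  have "(16::real) ^ n = 2 ^ (4 * n)"
    by (simp add: power_mult)
  also have "\<dots> = 2 ^ (4 * n - 2) * 4"
    by (subst exponent) (simp add: power_add)
  finally show ?thesis
    unfolding Ecoef_def rho_def by (simp add: field_simps)
qed

lemma G_closed_eq_sum_chains:
  assumes "1 \<le> n"
  shows "G_closed d c z n = of_real (real n * real (2 * n choose n) / 2 ^ (4 * n - 2)) *
      (\<Sum>k\<in>chains n d. of_real (real ((2 * n - 1) choose (n - k 0))) * chain_prod d 1 c z 0 k)"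
proof -
  have prefactor: "of_real (real n * real (2 * n choose n) / 2 ^ (4 * n - 2)) * of_real (real ((2 * n - 1) choose (n - k)))
      = 2 * complex_of_real (Ecoef n k)" for k
    unfolding of_real_mult[symmetric] prefactor_times_choose[OF assms] by simp
  show ?thesis
    unfolding sum_chains_nested[of "\<lambda>k0. of_real (real ((2 * n - 1) choose (n - k0)))"] G_closed_def sum_distrib_left
    by (simp only: mult.assoc[symmetric] prefactor)
qed

lemma chain_prod_eq:
  "chain_prod d 1 c z 0 k =
    (\<Prod>i\<le>d.
       (let cc = (\<lambda>j. if j = 0 then 1 else if j = Suc d then 0 else c j);
            \<delta> = delta (cc i) + delta (cc (Suc i));
            kp = (if i = 0 then 0 else k (i - 1));
            w = 2 * of_nat (k i) - (1::complex)
        in (- 1) ^ (k i * \<delta>) * w powi (int \<delta> - 1) / (w ^ 2 - z i ^ 2)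
           * of_real (Vsharp kp (k i) (replicate (cc i - 3) 1))))"
  unfolding chain_prod_def chain_index_def chain_factor_eq Let_def ..

theorem theorem2p1:
  fixes n d :: nat and c :: "nat \<Rightarrow> nat" and z :: "nat \<Rightarrow> complex"
  assumes "n \<ge> 1"
    and "\<forall>i\<in>{1..d}. c i \<ge> 1 \<and> c i \<noteq> 2"
    and "\<forall>j\<le>d. norm (z j) < 1"
  shows "Gterm n d c z summable_on gexps d
    \<and> G n d c z =
      of_real (real n * real (2 * n choose n) / 2 ^ (4 * n - 2)) *
      (\<Sum>k\<in>chains n d.
         of_real (real ((2 * n - 1) choose (n - k 0))) *
         (\<Prod>i\<le>d.
            (let cc = (\<lambda>j. if j = 0 then 1 else if j = Suc d then 0 else c j);
                 \<delta> = delta (cc i) + delta (cc (Suc i));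
                 kp = (if i = 0 then 0 else k (i - 1));
                 w = 2 * of_nat (k i) - (1::complex)
             in (- 1) ^ (k i * \<delta>) * w powi (int \<delta> - 1) / (w ^ 2 - z i ^ 2)
                * of_real (Vsharp kp (k i) (replicate (cc i - 3) 1)))))"
proof -
  have "(Gterm n d c z has_sum G_closed d c z n) (gexps d)"
    using assms by (intro has_sum_Gterm) auto
  then show ?thesis
    unfolding G_def G_closed_eq_sum_chains[OF assms(1)] chain_prod_eq
    by (simp add: has_sum_imp_summable infsumI)
qed

end
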